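(* Let $\beta_1,\beta_2>0$, $\nu_1,\nu_2\in(0,1)$, $\rho_1,\rho_2\in(0,1)$, and define \[ A=\beta_1(1-\nu_1)+\beta_2(1-\nu_2),\quad a=\beta_1(1-\nu_1)-\beta_2(1-\nu_2),\quad B=\beta_1\nu_1+\beta_2\nu_2,\quad b=-\beta_1\nu_1+\beta_2\nu_2, \] \[ D=\beta_1(1-\nu_1)(1-\rho_1)+\beta_2(1-\nu_2)(1-\rho_2),\qquad d=-\beta_1(1-\nu_1)(1-\rho_1)+\beta_2(1-\nu_2)(1-\rho_2). \] Assume $1-\frac{DB-bd}{AB+ba}>0$ and set $z_0=\ln\!\Big(1-\frac{DB-bd}{AB+ba}\Big)$. Consider the system on $\mathbb{R}^3$ \[ \dot z=e^{z_0}(1-e^{z})-u+\frac{b}{B}\,w,\qquad \dot u=\Big(A+\frac{ba}{B}\Big)e^{z_0}(e^{z}-1),\qquad \dot w=a\,e^{z_0}(e^{z}-1)-B\,w . \] If $B^2>ab$, then this system is globally stable, with all solutions tending to $(0,0,0)$ as $t\to\infty$.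
   Context: The system is obtained from the two-group resource–consumption model $\dot x=(1-x)x-(y_1+y_2)x$, $\dot y_1=\beta_1((1-\nu_1)(x-\rho_1)-\nu_1(y_1-y_2))$, $\dot y_2=\beta_2((1-\nu_2)(x-\rho_2)-\nu_2(y_2-y_1))$ by shifting its equilibrium to the origin after the substitutions $\ln x$, $y_1+y_2$, $y_1-y_2$; $e^{z_0}$ is the equilibrium resource level. *)

theory Defs
  imports "HOL-Analysis.Analysis"
begin

definition vf :: "real \<Rightarrow> real \<Rightarrow> real \<Rightarrow> real \<Rightarrow> real \<Rightarrow> real \<times> real \<times> real \<Rightarrow> real \<times> real \<times> real" where
  "vf A a B b z0 = (\<lambda>(z, u, w).
     (exp z0 * (1 - exp z) - u + (b / B) * w,
      (A + b * a / B) * exp z0 * (exp z - 1),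
      a * exp z0 * (exp z - 1) - B * w))"

definition is_solution :: "(real \<times> real \<times> real \<Rightarrow> real \<times> real \<times> real) \<Rightarrow> (real \<Rightarrow> real \<times> real \<times> real) \<Rightarrow> bool" where
  "is_solution f x \<longleftrightarrow> (\<forall>t\<ge>0. (x has_vector_derivative f (x t)) (at t within {0..}))"

definition globally_asymptotically_stable :: "(real \<times> real \<times> real \<Rightarrow> real \<times> real \<times> real) \<Rightarrow> bool" where
  "globally_asymptotically_stable f \<longleftrightarrow>
     (\<forall>x0. \<exists>x. is_solution f x \<and> x 0 = x0) \<and>
     (\<forall>e>0. \<exists>d>0. \<forall>x. is_solution f x \<and> norm (x 0) < d \<longrightarrow> (\<forall>t\<ge>0. norm (x t) < e)) \<and>
     (\<forall>x. is_solution f x \<longrightarrow> (x \<longlongrightarrow> 0) at_top)"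

end

theory Submission
  imports Defs
begin

(* With K = A + b a / B > 0, the function
     V (z, u, w) = K (e^z0 (e^z - 1 - z) + tau w^2 / 2) + u^2 / 2
   is a Lyapunov function: along solutions dV/dt = - K q (phi, w), where phi = e^z0 (e^z - 1) and
   q (x, y) = x^2 - (b / B + tau a) x y + tau B y^2.  The condition B^2 > a b is what
   allows a weight tau > 0 making q positive definite.
   V grows at least linearly in |z| and quadratically in u and w.  Hence z stays bounded, so the
   Picard solutions of a truncated, globally Lipschitz field solve the system for all time, and
   the origin is Lyapunov stable.  Since dV/dt <= - gamma K (phi^2 + w^2) while phi^2 + w^2 has
   bounded derivative along a solution, phi and w, hence z and w, tend to 0.  Then u^2 tends to
   twice the limit of V; were that limit positive, u would keep a sign with |u| bounded away
   from 0, and z' = - u + o(1) would drive z away from 0. *)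

section \<open>Forward solutions of globally Lipschitz equations\<close>

lemma at_within_atLeast_eq_Icc:
  fixes t :: real
  shows "0 \<le> t \<Longrightarrow> at t within {0..} = at t within {0..t+1}"
  by (rule at_within_nhd[of t "{..<t+1}"]) auto

lemma at_within_atLeast_eq_at:
  fixes t :: real
  shows "0 < t \<Longrightarrow> at t within {0..} = at t"
  by (rule at_within_interior) simp

lemma has_integral_power_Icc0:
  fixes t :: real
  assumes "0 \<le> t"
  shows "((\<lambda>s. s ^ n) has_integral t ^ Suc n / Suc n) {0..t}"
proof -
  have "((\<lambda>s. s ^ Suc n / Suc n) has_real_derivative Suc n * s ^ n / Suc n) (at s within {0..t})"
    for s :: real
    using DERIV_pow[of "Suc n" s] by (intro DERIV_cdivide) (rule has_field_derivative_at_within, simp)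
  then have "((\<lambda>s. s ^ Suc n / Suc n) has_real_derivative s ^ n) (at s within {0..t})" for s :: real
    by (simp del: of_nat_Suc)
  from fundamental_theorem_of_calculus[OF assms this[unfolded has_real_derivative_iff_has_vector_derivative]]
  show ?thesis by simp
qed

lemma continuous_on_integral_atLeast:
  fixes g :: "real \<Rightarrow> 'a::banach"
  assumes "continuous_on {0..} g"
  shows "continuous_on {0..} (\<lambda>t. integral {0..t} g)"
  unfolding continuous_on_eq_continuous_within
proof
  fix t :: real assume t: "t \<in> {0..}"
  have "((\<lambda>u. integral {0..u} g) has_vector_derivative g t) (at t within {0..t+1})"
    by (rule integral_has_vector_derivative) (use t in \<open>auto intro: continuous_on_subset[OF assms]\<close>)
  then show "continuous (at t within {0..}) (\<lambda>u. integral {0..u} g)"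
    using at_within_atLeast_eq_Icc t by (simp add: has_vector_derivative_continuous)
qed

fun picard_iterate :: "('a::banach \<Rightarrow> 'a) \<Rightarrow> 'a \<Rightarrow> nat \<Rightarrow> real \<Rightarrow> 'a" where
  "picard_iterate f x0 0 = (\<lambda>t. x0)"
| "picard_iterate f x0 (Suc n) = (\<lambda>t. x0 + integral {0..t} (\<lambda>s. f (picard_iterate f x0 n s)))"

lemma continuous_on_picard_iterate:
  assumes "continuous_on UNIV f"
  shows "continuous_on {0..} (picard_iterate f x0 n)"
proof (induction n)
  case (Suc n)
  have "continuous_on {0..} (\<lambda>s. f (picard_iterate f x0 n s))"
    by (rule continuous_on_compose2[OF assms Suc]) auto
  then show ?case by (auto intro!: continuous_intros continuous_on_integral_atLeast)
qed simp

lemma picard_iterate_step_bound: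
  fixes f :: "'a::banach \<Rightarrow> 'a"
  assumes lip: "L-lipschitz_on UNIV f" and t: "0 \<le> t"
  shows "norm (picard_iterate f x0 (Suc n) t - picard_iterate f x0 n t)
           \<le> norm (f x0) * L ^ n * t ^ Suc n / fact (Suc n)"
  using t
proof (induction n arbitrary: t)
  case 0
  then show ?case by simp
next
  case (Suc n)
  let ?P = "picard_iterate f x0" and ?N = "norm (f x0)"
  have L: "0 \<le> L" using lipschitz_on_nonneg[OF lip] .
  have "continuous_on {0..t} (\<lambda>s. f (?P k s))" for k
    by (rule continuous_on_compose2[OF lipschitz_on_continuous_on[OF lip]
          continuous_on_subset[OF continuous_on_picard_iterate]])
      (auto intro: lipschitz_on_continuous_on[OF lip])
  then have int: "(\<lambda>s. f (?P k s)) integrable_on {0..t}" for k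
    by (rule integrable_continuous_real)
  have bound_int: "((\<lambda>s. L * (?N * L ^ n * s ^ Suc n / fact (Suc n))) has_integral
      ?N * L ^ Suc n * t ^ Suc (Suc n) / fact (Suc (Suc n))) {0..t}"
    using has_integral_mult_right[OF has_integral_power_Icc0[OF Suc.prems, of "Suc n"],
        of "L * ?N * L ^ n / fact (Suc n)"]
    by (simp add: field_simps del: of_nat_Suc)
  have P_Suc: "?P (Suc k) t = x0 + integral {0..t} (\<lambda>s. f (?P k s))" for k
    by simp
  have "norm (?P (Suc (Suc n)) t - ?P (Suc n) t)
      = norm (integral {0..t} (\<lambda>s. f (?P (Suc n) s) - f (?P n s)))"
    by (simp only: P_Suc) (simp add: integral_diff[OF int int] del: picard_iterate.simps)
  also have "\<dots> \<le> integral {0..t} (\<lambda>s. L * (?N * L ^ n * s ^ Suc n / fact (Suc n)))"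
  proof (rule integral_norm_bound_integral)
    fix s assume s: "s \<in> {0..t}"
    have "norm (f (?P (Suc n) s) - f (?P n s)) \<le> L * norm (?P (Suc n) s - ?P n s)"
      using lipschitz_onD[OF lip] by (simp add: dist_norm)
    also have "\<dots> \<le> L * (?N * L ^ n * s ^ Suc n / fact (Suc n))"
      using Suc.IH[of s] s L by (intro mult_left_mono) auto
    finally show "norm (f (?P (Suc n) s) - f (?P n s)) \<le> \<dots>" .
  qed (use integrable_diff[OF int int] bound_int in \<open>auto simp del: picard_iterate.simps\<close>)
  also have "\<dots> = ?N * L ^ Suc n * t ^ Suc (Suc n) / fact (Suc (Suc n))"
    using bound_int by (rule integral_unique)
  finally show ?case .
qed

lemma picard_iterate_uniform_limit:
  fixes f :: "'a::banach \<Rightarrow> 'a"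
  assumes lip: "L-lipschitz_on UNIV f"
  obtains x where "\<And>T. 0 \<le> T \<Longrightarrow> uniform_limit {0..T} (picard_iterate f x0) x sequentially"
proof
  let ?P = "picard_iterate f x0" and ?N = "norm (f x0)"
  define d where "d i t = ?P (Suc i) t - ?P i t" for i t
  have P_eq: "?P n t = x0 + (\<Sum>i<n. d i t)" for n t
    using sum_lessThan_telescope[of "\<lambda>i. ?P i t" n] unfolding d_def by (simp del: picard_iterate.simps(2))
  fix T :: real assume T: "0 \<le> T"
  define M where "M i = ?N * L ^ i * T ^ Suc i / fact i" for i
  have "M = (\<lambda>i. ?N * T * (inverse (fact i) * (L * T) ^ i))"
    by (simp add: M_def fun_eq_iff power_mult_distrib field_simps)
  then have "summable M"
    by (simp add: summable_mult summable_exp)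
  moreover have "norm (d i t) \<le> M i" if "t \<in> {0..T}" for i t
  proof -
    have "norm (d i t) \<le> ?N * L ^ i * t ^ Suc i / fact (Suc i)"
      unfolding d_def using picard_iterate_step_bound[OF lip] that by auto
    also have "\<dots> \<le> M i"
      unfolding M_def using that lipschitz_on_nonneg[OF lip]
      by (intro frac_le mult_left_mono power_mono fact_mono) auto
    finally show ?thesis .
  qed
  ultimately have "uniform_limit {0..T} (\<lambda>n t. \<Sum>i<n. d i t) (\<lambda>t. \<Sum>i. d i t) sequentially"
    by (intro Weierstrass_m_test) auto
  then show "uniform_limit {0..T} ?P (\<lambda>t. x0 + (\<Sum>i. d i t)) sequentially"
    unfolding uniform_limit_iff P_eq dist_norm by simp
qed

theorem lipschitz_forward_solution_exists:
  fixes f :: "'a::banach \<Rightarrow> 'a"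
  assumes lip: "L-lipschitz_on UNIV f"
  shows "\<exists>x. (\<forall>t\<ge>0. (x has_vector_derivative f (x t)) (at t within {0..})) \<and> x 0 = x0"
proof -
  let ?P = "picard_iterate f x0"
  obtain x where lim: "\<And>T. 0 \<le> T \<Longrightarrow> uniform_limit {0..T} ?P x sequentially"
    using picard_iterate_uniform_limit[OF lip] by blast
  have cont_f: "continuous_on UNIV f"
    using lip by (rule lipschitz_on_continuous_on)
  have cont_P: "continuous_on {0..T} (?P n)" for n T
    by (rule continuous_on_subset[OF continuous_on_picard_iterate[OF cont_f]]) auto
  have cont_x: "continuous_on {0..T} (\<lambda>s. f (x s))" if "0 \<le> T" for T
    by (rule continuous_on_compose2[OF cont_f uniform_limit_theorem[OF _ lim[OF that]]])
      (auto intro: cont_P always_eventually)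
  have lim_f: "uniform_limit {0..T} (\<lambda>n s. f (?P n s)) (\<lambda>s. f (x s)) sequentially"
    if "0 \<le> T" for T
    by (rule uniform_limit_compose_uniformly_continuous_on[OF lim[OF that]
          lipschitz_on_uniformly_continuous[OF lip]]) auto
  have integral_eq: "x t = x0 + integral {0..t} (\<lambda>s. f (x s))" if t: "0 \<le> t" for t
  proof -
    obtain I J where I: "\<And>n. ((\<lambda>s. f (?P n s)) has_integral I n) {0..t}"
      and J: "((\<lambda>s. f (x s)) has_integral J) {0..t}" and "I \<longlonglongrightarrow> J"
      by (rule uniform_limit_integral[OF lim_f[OF t]])
        (auto intro: continuous_on_compose2[OF cont_f cont_P])
    then have "(\<lambda>n. ?P (Suc n) t) \<longlonglongrightarrow> x0 + J"
      by (simp add: integral_unique[OF I] tendsto_add)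
    moreover have "(\<lambda>n. ?P (Suc n) t) \<longlonglongrightarrow> x t"
      using LIMSEQ_Suc[OF tendsto_uniform_limitI[OF lim[OF t]]] t by simp
    ultimately show ?thesis
      using J integral_unique LIMSEQ_unique by metis
  qed
  have "(x has_vector_derivative f (x t)) (at t within {0..})" if t: "0 \<le> t" for t
  proof -
    have "((\<lambda>s. x0 + integral {0..s} (\<lambda>r. f (x r))) has_vector_derivative f (x t))
        (at t within {0..t+1})"
      using t by (auto intro!: derivative_eq_intros integral_has_vector_derivative cont_x)
    then have "(x has_vector_derivative f (x t)) (at t within {0..t+1})"
      by (rule has_vector_derivative_transform[rotated 2]) (use t integral_eq in auto)
    then show ?thesis
      using at_within_atLeast_eq_Icc[OF t] by simp
  qed
  moreover have "x 0 = x0"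
    using integral_eq[of 0] by simp
  ultimately show ?thesis by blast
qed


lemma has_vector_derivative_fst:
  "(x has_vector_derivative v) F \<Longrightarrow> ((\<lambda>t. fst (x t)) has_vector_derivative fst v) F"
  unfolding has_vector_derivative_def by (drule has_derivative_fst) simp

lemma has_vector_derivative_snd:
  "(x has_vector_derivative v) F \<Longrightarrow> ((\<lambda>t. snd (x t)) has_vector_derivative snd v) F"
  unfolding has_vector_derivative_def by (drule has_derivative_snd) simp

lemma continuous_on_if_DERIV_within_atLeast:
  fixes f :: "real \<Rightarrow> real"
  assumes "0 \<le> t1" and "\<And>s. t1 \<le> s \<Longrightarrow> s \<le> t2 \<Longrightarrow> (f has_real_derivative f' s) (at s within {0..})"
  shows "continuous_on {t1..t2} f"
  unfolding continuous_on_eq_continuous_within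
proof
  fix s assume "s \<in> {t1..t2}"
  then have "continuous (at s within {0..}) f"
    using assms(2) by (auto intro: DERIV_continuous)
  then show "continuous (at s within {t1..t2}) f"
    by (rule continuous_within_subset) (use assms(1) in auto)
qed

lemma DERIV_within_atLeast_nonpos_imp_decreasing:
  fixes f :: "real \<Rightarrow> real"
  assumes "0 \<le> t1" "t1 \<le> t2"
    and deriv: "\<And>s. t1 \<le> s \<Longrightarrow> s \<le> t2 \<Longrightarrow> (f has_real_derivative f' s) (at s within {0..})"
    and nonpos: "\<And>s. t1 < s \<Longrightarrow> s < t2 \<Longrightarrow> f' s \<le> 0"
  shows "f t2 \<le> f t1"
proof (rule DERIV_nonpos_imp_decreasing_open[OF assms(2)])
  fix s assume s: "t1 < s" "s < t2"
  then have "(f has_real_derivative f' s) (at s)"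
    using deriv[of s] at_within_atLeast_eq_at[of s] assms(1) by simp
  with nonpos[OF s] show "\<exists>y. (f has_real_derivative y) (at s) \<and> y \<le> 0"
    by blast
qed (use assms in \<open>blast intro: continuous_on_if_DERIV_within_atLeast\<close>)

lemma DERIV_within_atLeast_nonneg_imp_increasing:
  fixes f :: "real \<Rightarrow> real"
  assumes "0 \<le> t1" "t1 \<le> t2"
    and "\<And>s. t1 \<le> s \<Longrightarrow> s \<le> t2 \<Longrightarrow> (f has_real_derivative f' s) (at s within {0..})"
    and "\<And>s. t1 < s \<Longrightarrow> s < t2 \<Longrightarrow> 0 \<le> f' s"
  shows "f t1 \<le> f t2"
  using DERIV_within_atLeast_nonpos_imp_decreasing[of t1 t2 "\<lambda>t. - f t" "\<lambda>t. - f' t"] assms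
  by (auto intro: derivative_intros)

lemma sgn_eq_if_continuous_nonzero:
  fixes g :: "real \<Rightarrow> real"
  assumes "T \<le> t" "continuous_on {T..t} g" "\<And>s. T \<le> s \<Longrightarrow> s \<le> t \<Longrightarrow> g s \<noteq> 0"
  shows "sgn (g t) = sgn (g T)"
proof (rule ccontr)
  assume "sgn (g t) \<noteq> sgn (g T)"
  then have "g T < 0 \<and> 0 < g t \<or> g t < 0 \<and> 0 < g T"
    using assms(1) assms(3)[of T] assms(3)[of t] by (auto simp: sgn_if split: if_splits)
  then obtain s where "T \<le> s" "s \<le> t" "g s = 0"
    using IVT'[of g T 0 t] IVT2'[of g t 0 T] assms(1,2) by force
  with assms(3) show False by blast
qed

lemma stays_below_if_never_hits:
  fixes g :: "real \<Rightarrow> real"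
  assumes cont: "\<And>t. continuous_on {0..t} g" and start: "g 0 < M"
    and no_hit: "\<And>\<tau>. 0 \<le> \<tau> \<Longrightarrow> g \<tau> = M \<Longrightarrow> (\<And>s. 0 \<le> s \<Longrightarrow> s \<le> \<tau> \<Longrightarrow> g s \<le> M) \<Longrightarrow> False"
    and "0 \<le> t"
  shows "g t < M"
proof (rule ccontr)
  assume "\<not> g t < M"
  have hit: "\<exists>s. 0 \<le> s \<and> s \<le> t' \<and> g s = M" if "0 \<le> t'" "M \<le> g t'" for t'
    using IVT'[of g 0 M t'] start that cont by auto
  define S where "S = {0..t} \<inter> g -` {M}"
  have "S \<noteq> {}" "bdd_below S"
    using hit[of t] \<open>0 \<le> t\<close> \<open>\<not> g t < M\<close> by (auto simp: S_def bdd_below_def)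
  moreover have "closed S"
    unfolding S_def by (rule continuous_closed_preimage) (auto intro: cont)
  ultimately have "Inf S \<in> S"
    by (rule closed_contains_Inf)
  then have "0 \<le> Inf S" "g (Inf S) = M"
    by (auto simp: S_def)
  moreover have "g s \<le> M" if s: "0 \<le> s" "s \<le> Inf S" for s
  proof (rule ccontr)
    assume "\<not> g s \<le> M"
    then obtain s' where "0 \<le> s'" "s' \<le> s" "g s' = M"
      using hit[of s] s by force
    moreover have "s \<le> t"
      using s \<open>Inf S \<in> S\<close> by (auto simp: S_def)
    ultimately have "s' \<in> S" "s' \<le> Inf S"
      using s by (auto simp: S_def)
    then have "s = Inf S"
      using cInf_lower[OF \<open>s' \<in> S\<close> \<open>bdd_below S\<close>] \<open>s' \<le> s\<close> s by auto
    then show False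
      using \<open>\<not> g s \<le> M\<close> \<open>g (Inf S) = M\<close> by simp
  qed
  ultimately show False
    by (rule no_hit)
qed

lemma antimono_tendsto_Inf_atLeast:
  fixes g :: "real \<Rightarrow> real"
  assumes antimono: "\<And>s t. 0 \<le> s \<Longrightarrow> s \<le> t \<Longrightarrow> g t \<le> g s" and bdd: "bdd_below (g ` {0..})"
  obtains l where "(g \<longlongrightarrow> l) at_top" "\<And>t. 0 \<le> t \<Longrightarrow> l \<le> g t"
proof
  let ?l = "Inf (g ` {0..})"
  show lower: "?l \<le> g t" if "0 \<le> t" for t
    using that bdd by (auto intro: cInf_lower)
  show "(g \<longlongrightarrow> ?l) at_top"
  proof (rule decreasing_tendsto)
    show "\<forall>\<^sub>F t in at_top. ?l \<le> g t"
      unfolding eventually_at_top_linorder using lower by blast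
    fix v assume "?l < v"
    then obtain T where "0 \<le> T" "g T < v"
      using bdd by (auto simp: cInf_less_iff)
    then have "g t < v" if "T \<le> t" for t
      using antimono[of T t] that by linarith
    then show "\<forall>\<^sub>F t in at_top. g t < v"
      unfolding eventually_at_top_linorder by blast
  qed
qed


lemma norm_triple_le:
  fixes x y z :: real
  shows "norm (x, y, z) \<le> \<bar>x\<bar> + \<bar>y\<bar> + \<bar>z\<bar>"
  using norm_Pair_le[of x "(y, z)"] norm_Pair_le[of y z] by simp

lemma exp_gt_add_one_self:
  fixes x :: real
  assumes "x \<noteq> 0"
  shows "1 + x < exp x"
proof (cases "0 \<le> 1 + x / 2")
  case True
  have "0 < x * x"
    using assms not_real_square_gt_zero by blast
  then have "1 + x < (1 + x / 2)\<^sup>2"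
    by (simp add: power2_eq_square field_simps)
  also have "\<dots> \<le> exp (x / 2) ^ 2"
    using True by (intro power_mono) auto
  also have "\<dots> = exp x"
    by (simp add: power2_eq_square flip: exp_add)
  finally show ?thesis .
next
  case False
  then show ?thesis
    using exp_gt_zero[of x] by linarith
qed

lemma two_mult_le_exp:
  fixes x :: real
  shows "2 * x \<le> exp x"
proof (cases "0 \<le> x")
  case True
  have "0 \<le> (x - 1)\<^sup>2" by simp
  then show ?thesis
    using exp_lower_Taylor_quadratic[OF True] by (simp add: power2_eq_square algebra_simps)
qed (smt (verit) exp_gt_zero)

lemma exp_minus_one_minus_self_ge_abs:
  fixes x :: real
  shows "\<bar>x\<bar> - 1 \<le> exp x - 1 - x"
  using two_mult_le_exp[of x] exp_gt_zero[of x] by (cases "0 \<le> x") auto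

lemma exp_minus_one_minus_self_mono:
  fixes x y :: real
  assumes "0 \<le> x * y" "\<bar>x\<bar> \<le> \<bar>y\<bar>"
  shows "exp x - 1 - x \<le> exp y - 1 - y"
proof (cases "0 \<le> y")
  case True
  then have "0 \<le> x" "x \<le> y"
    using assms by (auto simp: zero_le_mult_iff)
  have "y - x \<le> exp x * (y - x)"
    using mult_right_mono[of 1 "exp x" "y - x"] \<open>x \<le> y\<close> \<open>0 \<le> x\<close> by simp
  also have "\<dots> \<le> exp x * (exp (y - x) - 1)"
    using exp_ge_add_one_self[of "y - x"] by (intro mult_left_mono) (linarith, simp)
  finally show ?thesis
    by (simp add: exp_diff algebra_simps)
next
  case False
  then have "x \<le> 0" "y \<le> x"
    using assms by (auto simp: zero_le_mult_iff)
  have "1 - exp (y - x) \<le> x - y"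
    using exp_ge_add_one_self[of "y - x"] by linarith
  then have "exp x * (1 - exp (y - x)) \<le> exp x * (x - y)"
    by (intro mult_left_mono) auto
  also have "\<dots> \<le> x - y"
    using \<open>x \<le> 0\<close> \<open>y \<le> x\<close> by (simp add: mult_left_le_one_le)
  finally show ?thesis
    by (simp add: exp_diff algebra_simps)
qed

lemma abs_exp_diff_le:
  fixes r s M :: real
  assumes "r \<le> M" "s \<le> M"
  shows "\<bar>exp s - exp r\<bar> \<le> exp M * \<bar>s - r\<bar>"
proof -
  have *: "exp s - exp r \<le> exp M * (s - r)" if "r \<le> s" "s \<le> M" for r s :: real
  proof -
    have "1 - exp (r - s) \<le> s - r"
      using exp_ge_add_one_self[of "r - s"] by linarith
    then have "exp s * (1 - exp (r - s)) \<le> exp s * (s - r)"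
      by (intro mult_left_mono) auto
    also have "\<dots> \<le> exp M * (s - r)"
      using that by (intro mult_right_mono) auto
    finally show ?thesis
      by (simp add: exp_diff algebra_simps)
  qed
  consider "r \<le> s" | "s \<le> r" by linarith
  then show ?thesis
  proof cases
    case 1
    then show ?thesis using *[OF 1 assms(2)] by simp
  next
    case 2
    then show ?thesis using *[OF 2 assms(1)] by (simp add: abs_minus_commute)
  qed
qed

lemma lipschitz_exp_clamp:
  fixes x y M :: real
  assumes "0 \<le> M"
  shows "\<bar>exp (max (-M) (min M x)) - exp (max (-M) (min M y))\<bar> \<le> exp M * \<bar>x - y\<bar>"
proof -
  have "\<bar>exp (max (-M) (min M x)) - exp (max (-M) (min M y))\<bar>
      \<le> exp M * \<bar>max (-M) (min M x) - max (-M) (min M y)\<bar>"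
    using assms by (intro abs_exp_diff_le) auto
  also have "\<dots> \<le> exp M * \<bar>x - y\<bar>"
    using assms by (intro mult_left_mono) (auto simp: max_def min_def abs_if)
  finally show ?thesis .
qed

lemma exists_pos_discriminant_neg:
  fixes a p B :: real
  assumes "0 < B" "a * p < B"
  shows "\<exists>t>0. (p + t * a)\<^sup>2 < 4 * t * B"
proof (cases "a = 0")
  case True
  have "p\<^sup>2 < 4 * (p\<^sup>2 / B + 1) * B"
    using assms by (simp add: algebra_simps add_pos_nonneg)
  moreover have "0 < p\<^sup>2 / B + 1"
    using assms by (simp add: add_nonneg_pos)
  ultimately show ?thesis
    using True by (intro exI[of _ "p\<^sup>2 / B + 1"]) simp
next
  case False
  \<comment> \<open>the minimiser of \<open>(p + t a)\<^sup>2 - 4 t B\<close>\<close>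
  define t where "t = (2 * B - a * p) / a\<^sup>2"
  have "0 < a\<^sup>2"
    using False by simp
  have "p + t * a = 2 * B / a"
    using False by (simp add: t_def field_simps power2_eq_square)
  then have "(p + t * a)\<^sup>2 = 4 * B\<^sup>2 / a\<^sup>2"
    by (simp add: power_divide power_mult_distrib)
  also have "\<dots> < 4 * B * (2 * B - a * p) / a\<^sup>2"
    using assms False by (intro divide_strict_right_mono \<open>0 < a\<^sup>2\<close>) (simp add: power2_eq_square)
  also have "\<dots> = 4 * t * B"
    by (simp add: t_def)
  finally show ?thesis
    using assms False by (intro exI[of _ t]) (simp add: t_def)
qed

lemma quadratic_form_coercive:
  fixes P R m :: real
  assumes "0 < P" "0 < R" "m\<^sup>2 < 4 * P * R"
  shows "\<exists>\<gamma>>0. \<forall>x y. \<gamma> * (x\<^sup>2 + y\<^sup>2) \<le> P * x\<^sup>2 - m * x * y + R * y\<^sup>2"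
proof -
  define g1 where "g1 = P - m\<^sup>2 / (4 * R)"
  define g2 where "g2 = R - m\<^sup>2 / (4 * P)"
  have "0 < g1" "0 < g2"
    using assms by (simp_all add: g1_def g2_def field_simps)
  have "min g1 g2 / 2 * (x\<^sup>2 + y\<^sup>2) \<le> P * x\<^sup>2 - m * x * y + R * y\<^sup>2" for x y
  proof -
    have "P * x\<^sup>2 - m * x * y + R * y\<^sup>2 = g1 * x\<^sup>2 + R * (y - m * x / (2 * R))\<^sup>2"
      using assms by (simp add: g1_def field_simps power2_eq_square)
    then have "g1 * x\<^sup>2 \<le> P * x\<^sup>2 - m * x * y + R * y\<^sup>2"
      using assms by simp
    moreover have "P * x\<^sup>2 - m * x * y + R * y\<^sup>2 = g2 * y\<^sup>2 + P * (x - m * y / (2 * P))\<^sup>2"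
      using assms by (simp add: g2_def field_simps power2_eq_square)
    then have "g2 * y\<^sup>2 \<le> P * x\<^sup>2 - m * x * y + R * y\<^sup>2"
      using assms by simp
    moreover have "min g1 g2 * x\<^sup>2 \<le> g1 * x\<^sup>2" "min g1 g2 * y\<^sup>2 \<le> g2 * y\<^sup>2"
      by (simp_all add: mult_right_mono)
    ultimately show ?thesis
      by (simp add: algebra_simps)
  qed
  with \<open>0 < g1\<close> \<open>0 < g2\<close> show ?thesis
    by (intro exI[of _ "min g1 g2 / 2"]) auto
qed


section \<open>The Lyapunov function\<close>

locale shifted_system =
  fixes A a B b z0 \<tau> :: real
  assumes B_pos: "0 < B" and K_pos: "0 < A + b * a / B" and \<tau>_pos: "0 < \<tau>"
    and discriminant_neg: "(b / B + \<tau> * a)\<^sup>2 < 4 * \<tau> * B"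
begin

definition "K = A + b * a / B"
definition "c = exp z0"
definition "F = vf A a B b z0"

lemma K_gt_0: "0 < K"
  using K_pos by (simp add: K_def)

lemma c_gt_0: "0 < c"
  by (simp add: c_def)

lemma F_simp:
  "F (z, u, w) = (c * (1 - exp z) - u + b / B * w, K * c * (exp z - 1), a * c * (exp z - 1) - B * w)"
  by (simp add: F_def vf_def c_def K_def)

definition "phi z = c * (exp z - 1)"
definition "G z = c * (exp z - 1 - z)"
definition "V p = K * (G (fst p) + \<tau> / 2 * (snd (snd p))\<^sup>2) + (fst (snd p))\<^sup>2 / 2"
definition "q x y = x\<^sup>2 - (b / B + \<tau> * a) * x * y + \<tau> * B * y\<^sup>2"
definition "dissipation p = K * q (phi (fst p)) (snd (snd p))"
definition "phi_w_sq p = (phi (fst p))\<^sup>2 + (snd (snd p))\<^sup>2"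
definition "\<gamma> = (SOME \<gamma>. 0 < \<gamma> \<and> (\<forall>x y. \<gamma> * (x\<^sup>2 + y\<^sup>2) \<le> q x y))"

lemma \<gamma>_gt_0: "0 < \<gamma>" and \<gamma>_le_q: "\<gamma> * (x\<^sup>2 + y\<^sup>2) \<le> q x y"
proof -
  have "\<exists>\<gamma>>0. \<forall>x y. \<gamma> * (x\<^sup>2 + y\<^sup>2) \<le> q x y"
    using quadratic_form_coercive[of 1 "\<tau> * B" "b / B + \<tau> * a"] B_pos \<tau>_pos discriminant_neg
    by (simp add: q_def)
  from someI_ex[OF this] show "0 < \<gamma>" "\<gamma> * (x\<^sup>2 + y\<^sup>2) \<le> q x y"
    unfolding \<gamma>_def by auto
qed

lemma dissipation_ge: "K * \<gamma> * phi_w_sq p \<le> dissipation p"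
  using \<gamma>_le_q K_gt_0 by (simp add: dissipation_def phi_w_sq_def mult.assoc mult_left_mono)

lemma phi_w_sq_nonneg: "0 \<le> phi_w_sq p"
  by (simp add: phi_w_sq_def)

lemma G_nonneg: "0 \<le> G z"
  unfolding G_def using exp_ge_add_one_self[of z] c_gt_0 by (intro mult_nonneg_nonneg) linarith+

lemma G_ge_abs: "c * (\<bar>z\<bar> - 1) \<le> G z"
  using exp_minus_one_minus_self_ge_abs[of z] c_gt_0 by (simp add: G_def)

lemma G_gt_0: "z \<noteq> 0 \<Longrightarrow> 0 < G z"
  using exp_gt_add_one_self[of z] c_gt_0 by (simp add: G_def)

lemma G_mono: "0 \<le> x * y \<Longrightarrow> \<bar>x\<bar> \<le> \<bar>y\<bar> \<Longrightarrow> G x \<le> G y"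
  using exp_minus_one_minus_self_mono[of x y] c_gt_0 by (simp add: G_def)

lemma V_simp: "V (z, u, w) = K * (G z + \<tau> / 2 * w\<^sup>2) + u\<^sup>2 / 2"
  by (simp add: V_def)

lemma K_G_le_V: "K * G (fst p) \<le> V p"
  using K_gt_0 \<tau>_pos by (simp add: V_def algebra_simps)

lemma V_nonneg: "0 \<le> V p"
  using K_G_le_V[of p] G_nonneg[of "fst p"] K_gt_0 by (smt (verit) zero_le_mult_iff)

lemma solution_component_derivatives:
  assumes "(x has_vector_derivative F (x t)) (at t within S)" and "x t = (z, u, w)"
  shows "((\<lambda>t. fst (x t)) has_real_derivative c * (1 - exp z) - u + b / B * w) (at t within S)"
    and "((\<lambda>t. fst (snd (x t))) has_real_derivative K * c * (exp z - 1)) (at t within S)"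
    and "((\<lambda>t. snd (snd (x t))) has_real_derivative a * c * (exp z - 1) - B * w) (at t within S)"
  using has_vector_derivative_fst[OF assms(1)] has_vector_derivative_fst[OF has_vector_derivative_snd[OF assms(1)]]
    has_vector_derivative_snd[OF has_vector_derivative_snd[OF assms(1)]]
  by (simp_all add: assms(2) F_simp has_real_derivative_iff_has_vector_derivative)

lemma V_has_derivative:
  assumes "(x has_vector_derivative F (x t)) (at t within S)"
  shows "((\<lambda>t. V (x t)) has_real_derivative - dissipation (x t)) (at t within S)"
proof -
  obtain z u w where xt: "x t = (z, u, w)"
    by (cases "x t") auto
  note d = solution_component_derivatives[OF assms xt]
  let ?z' = "c * (1 - exp z) - u + b / B * w" and ?u' = "K * c * (exp z - 1)"
    and ?w' = "a * c * (exp z - 1) - B * w"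
  have "(\<lambda>t. V (x t)) = (\<lambda>t. K * (c * (exp (fst (x t)) - 1 - fst (x t)) + \<tau> / 2 * (snd (snd (x t)))\<^sup>2)
      + (fst (snd (x t)))\<^sup>2 / 2)"
    by (simp add: V_def G_def)
  moreover have "((\<lambda>t. K * (c * (exp (fst (x t)) - 1 - fst (x t)) + \<tau> / 2 * (snd (snd (x t)))\<^sup>2)
      + (fst (snd (x t)))\<^sup>2 / 2) has_real_derivative K * (c * (exp z * ?z' - ?z') + \<tau> * w * ?w') + u * ?u')
      (at t within S)"
    by (auto intro!: derivative_eq_intros d simp: xt)
  moreover have "K * (c * (exp z * ?z' - ?z') + \<tau> * w * ?w') + u * ?u' = - dissipation (x t)"
    by (simp add: xt dissipation_def q_def phi_def algebra_simps power2_eq_square)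
  ultimately show ?thesis
    by simp
qed

lemma V_decrease:
  assumes deriv: "\<And>s. t1 \<le> s \<Longrightarrow> s \<le> t2 \<Longrightarrow> (x has_vector_derivative F (x s)) (at s within {0..})"
    and "0 \<le> t1" "t1 \<le> t2" and away: "\<And>s. t1 \<le> s \<Longrightarrow> s \<le> t2 \<Longrightarrow> \<delta> \<le> phi_w_sq (x s)"
  shows "V (x t2) + K * \<gamma> * \<delta> * (t2 - t1) \<le> V (x t1)"
proof -
  have "V (x t2) + K * \<gamma> * \<delta> * t2 \<le> V (x t1) + K * \<gamma> * \<delta> * t1"
  proof (rule DERIV_within_atLeast_nonpos_imp_decreasing[where f = "\<lambda>s. V (x s) + K * \<gamma> * \<delta> * s"])
    fix s assume "t1 \<le> s" "s \<le> t2"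
    then show "((\<lambda>s. V (x s) + K * \<gamma> * \<delta> * s) has_real_derivative - dissipation (x s) + K * \<gamma> * \<delta>)
        (at s within {0..})"
      by (auto intro!: derivative_eq_intros V_has_derivative deriv)
  next
    fix s assume "t1 < s" "s < t2"
    then have "K * \<gamma> * \<delta> \<le> K * \<gamma> * phi_w_sq (x s)"
      using away K_gt_0 \<gamma>_gt_0 by (intro mult_left_mono) auto
    then show "- dissipation (x s) + K * \<gamma> * \<delta> \<le> 0"
      using dissipation_ge[of "x s"] by linarith
  qed (use assms in auto)
  then show ?thesis
    by (simp add: algebra_simps)
qed

lemma V_antimono:
  assumes "\<And>s. t1 \<le> s \<Longrightarrow> s \<le> t2 \<Longrightarrow> (x has_vector_derivative F (x s)) (at s within {0..})"
    and "0 \<le> t1" "t1 \<le> t2"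
  shows "V (x t2) \<le> V (x t1)"
  using V_decrease[of t1 t2 x 0, OF assms(1-3) phi_w_sq_nonneg] by simp

end


section \<open>Global existence of solutions\<close>

context shifted_system
begin

definition "F_trunc M p = F (max (-M) (min M (fst p)), snd p)"

lemma F_trunc_eq: "\<bar>fst p\<bar> \<le> M \<Longrightarrow> F_trunc M p = F p"
  by (simp add: F_trunc_def abs_le_iff)

lemma F_trunc_lipschitz:
  assumes "0 \<le> M"
  shows "\<exists>L. L-lipschitz_on UNIV (F_trunc M)"
proof -
  define L where "L = c * exp M * (1 + K + \<bar>a\<bar>) + 1 + \<bar>b / B\<bar> + B"
  have dist_bound: "dist (F_trunc M p) (F_trunc M p') \<le> L * dist p p'" for p p'
  proof -
    obtain z u w z' u' w' where p: "p = (z, u, w)" and p': "p' = (z', u', w')"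
      by (cases p, cases p') auto
    define n where "n = norm (p - p')"
    have dz: "\<bar>z - z'\<bar> \<le> n" and "norm (u - u', w - w') \<le> n"
      unfolding n_def p p' using norm_fst_le[of "z - z'" "(u - u', w - w')"]
        norm_snd_le[of "(u - u', w - w')" "z - z'"] by simp_all
    then have du: "\<bar>u - u'\<bar> \<le> n" and dw: "\<bar>w - w'\<bar> \<le> n"
      using norm_fst_le[of "u - u'" "w - w'"] norm_snd_le[of "w - w'" "u - u'"] by simp_all
    define e where "e = c * (exp (max (-M) (min M z)) - exp (max (-M) (min M z')))"
    have de: "\<bar>e\<bar> \<le> c * exp M * n"
    proof -
      have "\<bar>e\<bar> \<le> c * (exp M * \<bar>z - z'\<bar>)"
        unfolding e_def using lipschitz_exp_clamp[OF assms, of z z'] c_gt_0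
        by (simp add: abs_mult mult_left_mono)
      also have "\<dots> \<le> c * exp M * n"
        using dz c_gt_0 by (simp add: mult_left_mono)
      finally show ?thesis .
    qed
    have diff: "F_trunc M p - F_trunc M p' = (- e - (u - u') + b / B * (w - w'), K * e, a * e - B * (w - w'))"
      by (simp add: F_trunc_def F_simp p p' e_def algebra_simps diff_divide_distrib)
    have d1: "\<bar>- e - (u - u') + b / B * (w - w')\<bar> \<le> \<bar>e\<bar> + \<bar>u - u'\<bar> + \<bar>b / B\<bar> * \<bar>w - w'\<bar>"
      using abs_mult[of "b / B" "w - w'"] by arith
    have d3: "\<bar>a * e - B * (w - w')\<bar> \<le> \<bar>a\<bar> * \<bar>e\<bar> + B * \<bar>w - w'\<bar>"
      using abs_mult[of a e] abs_mult[of B "w - w'"] B_pos by arith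
    have "dist (F_trunc M p) (F_trunc M p')
        \<le> \<bar>- e - (u - u') + b / B * (w - w')\<bar> + \<bar>K * e\<bar> + \<bar>a * e - B * (w - w')\<bar>"
      unfolding dist_norm diff by (rule norm_triple_le)
    also have "\<dots> \<le> \<bar>e\<bar> + \<bar>u - u'\<bar> + \<bar>b / B\<bar> * \<bar>w - w'\<bar> + K * \<bar>e\<bar> + (\<bar>a\<bar> * \<bar>e\<bar> + B * \<bar>w - w'\<bar>)"
      using d1 d3 K_gt_0 by (simp add: abs_mult)
    also have "\<dots> \<le> c * exp M * n + n + \<bar>b / B\<bar> * n + K * (c * exp M * n) + (\<bar>a\<bar> * (c * exp M * n) + B * n)"
      using de du dw K_gt_0 B_pos by (intro add_mono mult_left_mono) auto
    also have "\<dots> = L * dist p p'"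
      by (simp add: L_def n_def dist_norm algebra_simps)
    finally show ?thesis .
  qed
  have "0 \<le> L"
    using c_gt_0 K_gt_0 B_pos by (simp add: L_def)
  then show ?thesis
    using lipschitz_onI[of UNIV "F_trunc M" L] dist_bound by blast
qed

lemma solution_exists: "\<exists>x. is_solution F x \<and> x 0 = x0"
proof -
  \<comment> \<open>\<open>V \<ge> K c (\<bar>z\<bar> - 1)\<close> never grows, so \<open>\<bar>z\<bar>\<close> cannot reach this \<open>M\<close>.\<close>
  define M where "M = \<bar>fst x0\<bar> + V x0 / (K * c) + 2"
  have Kc: "0 < K * c"
    using K_gt_0 c_gt_0 by simp
  have "0 \<le> V x0 / (K * c)"
    using V_nonneg Kc by simp
  then have "0 \<le> M" and start: "\<bar>fst x0\<bar> < M"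
    by (simp_all add: M_def)
  have "V x0 / (K * c) < M - 1"
    by (simp add: M_def)
  then have V_start: "V x0 < K * c * (M - 1)"
    using Kc by (simp add: pos_divide_less_eq mult.commute)
  obtain L where "L-lipschitz_on UNIV (F_trunc M)"
    using F_trunc_lipschitz[OF \<open>0 \<le> M\<close>] by blast
  then obtain y where y: "\<And>t. 0 \<le> t \<Longrightarrow> (y has_vector_derivative F_trunc M (y t)) (at t within {0..})"
    and "y 0 = x0"
    using lipschitz_forward_solution_exists by blast
  have y_solves: "(y has_vector_derivative F (y t)) (at t within {0..})"
    if "0 \<le> t" "\<bar>fst (y t)\<bar> \<le> M" for t
    using y[OF that(1)] F_trunc_eq[OF that(2)] by simp
  have bounded: "\<bar>fst (y t)\<bar> < M" if "0 \<le> t" for t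
  proof (rule stays_below_if_never_hits[where g = "\<lambda>t. \<bar>fst (y t)\<bar>"])
    show "continuous_on {0..t} (\<lambda>t. \<bar>fst (y t)\<bar>)" for t
      using y by (intro continuous_on_rabs continuous_on_if_DERIV_within_atLeast)
        (auto simp: has_real_derivative_iff_has_vector_derivative intro: has_vector_derivative_fst)
  next
    fix t' assume "0 \<le> t'" and hit: "\<bar>fst (y t')\<bar> = M"
      and below: "\<And>s. 0 \<le> s \<Longrightarrow> s \<le> t' \<Longrightarrow> \<bar>fst (y s)\<bar> \<le> M"
    have "V (y t') \<le> V x0"
      using V_antimono[of 0 t' y] y_solves below \<open>0 \<le> t'\<close> \<open>y 0 = x0\<close> by auto
    moreover have "K * c * (M - 1) \<le> V (y t')"
      using K_G_le_V[of "y t'"] G_ge_abs[of "fst (y t')"] hit K_gt_0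
      by (smt (verit) mult.assoc mult_left_mono)
    ultimately show False
      using V_start by linarith
  qed (use start \<open>y 0 = x0\<close> that in auto)
  then have "is_solution F y"
    unfolding is_solution_def using y_solves by (simp add: less_imp_le)
  with \<open>y 0 = x0\<close> show ?thesis
    by blast
qed

end


section \<open>Convergence to the equilibrium\<close>

context shifted_system
begin

lemma V_solution_antimono: "is_solution F x \<Longrightarrow> 0 \<le> s \<Longrightarrow> s \<le> t \<Longrightarrow> V (x t) \<le> V (x s)"
  by (rule V_antimono) (auto simp: is_solution_def)

lemma V_solution_tendsto:
  assumes "is_solution F x"
  obtains l where "((\<lambda>t. V (x t)) \<longlongrightarrow> l) at_top" "\<And>t. 0 \<le> t \<Longrightarrow> l \<le> V (x t)"
proof (rule antimono_tendsto_Inf_atLeast)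
  show "bdd_below ((\<lambda>t. V (x t)) ` {0..})"
    by (rule bdd_belowI[of _ 0]) (auto intro: V_nonneg)
qed (use V_solution_antimono[OF assms] that in auto)

lemma V_sublevel_bounded: "bounded {p. V p \<le> v}"
proof -
  let ?r = "sqrt (2 * v / (K * \<tau>))"
  have "{p. V p \<le> v} \<subseteq> {-(v / (K * c) + 1)..v / (K * c) + 1} \<times> {-sqrt (2 * v)..sqrt (2 * v)} \<times> {-?r..?r}"
  proof
    fix p assume "p \<in> {p. V p \<le> v}"
    moreover obtain z u w where p: "p = (z, u, w)"
      by (cases p) auto
    ultimately have V: "V (z, u, w) \<le> v"
      by simp
    have parts: "0 \<le> K * G z" "0 \<le> K * \<tau> / 2 * w\<^sup>2" "0 \<le> u\<^sup>2 / 2"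
      using K_gt_0 \<tau>_pos G_nonneg by auto
    have V_eq: "V (z, u, w) = K * G z + K * \<tau> / 2 * w\<^sup>2 + u\<^sup>2 / 2"
      by (simp add: V_simp algebra_simps)
    have "K * c * (\<bar>z\<bar> - 1) \<le> K * G z"
      using G_ge_abs[of z] K_gt_0 by (simp add: mult.assoc)
    then have "K * c * (\<bar>z\<bar> - 1) \<le> v"
      using V V_eq parts by linarith
    then have "\<bar>z\<bar> - 1 \<le> v / (K * c)"
      using K_gt_0 c_gt_0 by (simp add: pos_le_divide_eq mult.commute)
    then have z: "\<bar>z\<bar> \<le> v / (K * c) + 1"
      by simp
    have "sqrt (u\<^sup>2) \<le> sqrt (2 * v)"
      using V V_eq parts by (intro real_sqrt_le_mono) linarith
    then have u: "\<bar>u\<bar> \<le> sqrt (2 * v)"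
      by simp
    have "K * \<tau> / 2 * w\<^sup>2 \<le> v"
      using V V_eq parts by linarith
    then have "sqrt (w\<^sup>2) \<le> ?r"
      using K_gt_0 \<tau>_pos by (intro real_sqrt_le_mono) (simp add: field_simps)
    then have w: "\<bar>w\<bar> \<le> ?r"
      by simp
    show "p \<in> {-(v / (K * c) + 1)..v / (K * c) + 1} \<times> {-sqrt (2 * v)..sqrt (2 * v)} \<times> {-?r..?r}"
      using z u w by (simp add: p abs_le_iff)
  qed
  moreover have "bounded ({-(v / (K * c) + 1)..v / (K * c) + 1} \<times> {-sqrt (2 * v)..sqrt (2 * v)} \<times> {-?r..?r})"
    by (intro compact_imp_bounded compact_Times compact_Icc)
  ultimately show ?thesis
    by (rule bounded_subset[rotated])
qed

definition "phi_w_sq_deriv p =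
  2 * phi (fst p) * c * exp (fst p) * (c * (1 - exp (fst p)) - fst (snd p) + b / B * snd (snd p))
  + 2 * snd (snd p) * (a * c * (exp (fst p) - 1) - B * snd (snd p))"

lemma phi_w_sq_has_derivative:
  assumes "(x has_vector_derivative F (x t)) (at t within S)"
  shows "((\<lambda>t. phi_w_sq (x t)) has_real_derivative phi_w_sq_deriv (x t)) (at t within S)"
proof -
  obtain z u w where xt: "x t = (z, u, w)"
    by (cases "x t") auto
  note d = solution_component_derivatives[OF assms xt]
  have "(\<lambda>t. phi_w_sq (x t)) = (\<lambda>t. (c * (exp (fst (x t)) - 1))\<^sup>2 + (snd (snd (x t)))\<^sup>2)"
    by (simp add: phi_w_sq_def phi_def)
  moreover have "((\<lambda>t. (c * (exp (fst (x t)) - 1))\<^sup>2 + (snd (snd (x t)))\<^sup>2) has_real_derivative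
      phi_w_sq_deriv (x t)) (at t within S)"
    by (auto intro!: derivative_eq_intros d simp: xt phi_w_sq_deriv_def phi_def)
  ultimately show ?thesis
    by simp
qed

lemma phi_w_sq_deriv_bounded:
  assumes sol: "is_solution F x"
  obtains D where "0 < D" "\<And>t. 0 \<le> t \<Longrightarrow> \<bar>phi_w_sq_deriv (x t)\<bar> \<le> D"
proof -
  obtain R where R: "{p. V p \<le> V (x 0)} \<subseteq> ball 0 R"
    using bounded_subset_ballD[OF V_sublevel_bounded] by blast
  have "continuous_on (cball 0 R) phi_w_sq_deriv"
    unfolding phi_w_sq_deriv_def phi_def by (intro continuous_intros)
  then have "bounded (phi_w_sq_deriv ` cball 0 R)"
    by (intro compact_imp_bounded compact_continuous_image compact_cball)
  then obtain D where "0 < D" "\<And>p. p \<in> cball 0 R \<Longrightarrow> \<bar>phi_w_sq_deriv p\<bar> \<le> D"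
    unfolding bounded_pos by auto
  moreover have "x t \<in> cball 0 R" if "0 \<le> t" for t
    using R V_solution_antimono[OF sol order_refl that] by fastforce
  ultimately show ?thesis
    using that by blast
qed

lemma phi_w_sq_lower_bound:
  assumes sol: "is_solution F x" and D: "\<And>t. 0 \<le> t \<Longrightarrow> \<bar>phi_w_sq_deriv (x t)\<bar> \<le> D"
    and "0 \<le> t" "t \<le> s"
  shows "phi_w_sq (x t) - D * (s - t) \<le> phi_w_sq (x s)"
proof -
  have "phi_w_sq (x t) + D * t \<le> phi_w_sq (x s) + D * s"
  proof (rule DERIV_within_atLeast_nonneg_imp_increasing[where f = "\<lambda>r. phi_w_sq (x r) + D * r"])
    fix r assume "t \<le> r" "r \<le> s"
    then show "((\<lambda>r. phi_w_sq (x r) + D * r) has_real_derivative phi_w_sq_deriv (x r) + D) (at r within {0..})"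
      using sol assms(3) unfolding is_solution_def
      by (auto intro!: derivative_eq_intros phi_w_sq_has_derivative)
  next
    fix r assume "t < r" "r < s"
    then show "0 \<le> phi_w_sq_deriv (x r) + D"
      using D[of r] assms(3) by auto
  qed (use assms in auto)
  then show ?thesis
    by (simp add: algebra_simps)
qed

lemma phi_w_sq_tendsto_zero:
  assumes sol: "is_solution F x"
  shows "((\<lambda>t. phi_w_sq (x t)) \<longlongrightarrow> 0) at_top"
proof -
  obtain D where "0 < D" and D: "\<And>t. 0 \<le> t \<Longrightarrow> \<bar>phi_w_sq_deriv (x t)\<bar> \<le> D"
    using phi_w_sq_deriv_bounded[OF sol] by blast
  obtain l where l: "((\<lambda>t. V (x t)) \<longlongrightarrow> l) at_top" "\<And>t. 0 \<le> t \<Longrightarrow> l \<le> V (x t)"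
    using V_solution_tendsto[OF sol] by blast
  \<comment> \<open>Whenever \<open>phi_w_sq \<ge> 2 \<delta>\<close>, it stays \<open>\<ge> \<delta>\<close> for a time \<open>\<delta> / D\<close>, and \<open>V\<close> drops by a fixed amount.\<close>
  have small: "\<forall>\<^sub>F t in at_top. phi_w_sq (x t) < 2 * \<delta>" if "0 < \<delta>" for \<delta>
  proof (rule ccontr)
    assume "\<not> ?thesis"
    then have often: "\<exists>t\<ge>T. 2 * \<delta> \<le> phi_w_sq (x t)" for T
      by (auto simp: eventually_at_top_linorder not_less)
    define r where "r = \<delta> / D"
    have "0 < r" "D * r = \<delta>"
      using \<open>0 < D\<close> \<open>0 < \<delta>\<close> by (simp_all add: r_def)
    then have "0 < K * \<gamma> * \<delta> * r"
      using K_gt_0 \<gamma>_gt_0 \<open>0 < \<delta>\<close> by simp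
    then obtain T where T: "\<And>t. T \<le> t \<Longrightarrow> V (x t) < l + K * \<gamma> * \<delta> * r"
      using order_tendstoD(2)[OF l(1), of "l + K * \<gamma> * \<delta> * r"]
      by (auto simp: eventually_at_top_linorder)
    obtain t where t: "max T 0 \<le> t" "2 * \<delta> \<le> phi_w_sq (x t)"
      using often by blast
    have "V (x (t + r)) + K * \<gamma> * \<delta> * (t + r - t) \<le> V (x t)"
    proof (rule V_decrease)
      fix s assume s: "t \<le> s" "s \<le> t + r"
      show "(x has_vector_derivative F (x s)) (at s within {0..})"
        using sol s t unfolding is_solution_def by auto
      have "D * (s - t) \<le> D * r"
        using s \<open>0 < D\<close> by (intro mult_left_mono) auto
      then show "\<delta> \<le> phi_w_sq (x s)"
        using phi_w_sq_lower_bound[OF sol D, of t s] s t \<open>D * r = \<delta>\<close> by auto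
    qed (use t \<open>0 < r\<close> in auto)
    then show False
      using T[of t] l(2)[of "t + r"] t \<open>0 < r\<close> by auto
  qed
  have "\<forall>\<^sub>F t in at_top. dist (phi_w_sq (x t)) 0 < e" if "0 < e" for e
    using small[of "e / 2"] that by (simp add: dist_real_def abs_of_nonneg phi_w_sq_nonneg)
  then show ?thesis
    by (rule tendstoI)
qed

lemma z_w_tendsto_zero:
  assumes sol: "is_solution F x"
  shows "((\<lambda>t. fst (x t)) \<longlongrightarrow> 0) at_top" and "((\<lambda>t. snd (snd (x t))) \<longlongrightarrow> 0) at_top"
proof -
  note lim = phi_w_sq_tendsto_zero[OF sol]
  have "((\<lambda>t. (phi (fst (x t)))\<^sup>2) \<longlongrightarrow> 0) at_top"
    by (rule tendsto_sandwich[OF _ _ tendsto_const lim]) (auto simp: phi_w_sq_def)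
  then have phi: "((\<lambda>t. phi (fst (x t))) \<longlongrightarrow> 0) at_top"
    by simp
  have "((\<lambda>t. (snd (snd (x t)))\<^sup>2) \<longlongrightarrow> 0) at_top"
    by (rule tendsto_sandwich[OF _ _ tendsto_const lim]) (auto simp: phi_w_sq_def)
  then show "((\<lambda>t. snd (snd (x t))) \<longlongrightarrow> 0) at_top"
    by simp
  have "((\<lambda>t. ln (1 + phi (fst (x t)) / c)) \<longlongrightarrow> ln (1 + 0 / c)) at_top"
    by (intro tendsto_intros phi) (use c_gt_0 in auto)
  moreover have "ln (1 + phi z / c) = z" for z
    using c_gt_0 by (simp add: phi_def)
  ultimately show "((\<lambda>t. fst (x t)) \<longlongrightarrow> 0) at_top"
    by simp
qed

lemma u_sq_tendsto:
  assumes sol: "is_solution F x"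
  obtains L where "((\<lambda>t. (fst (snd (x t)))\<^sup>2) \<longlongrightarrow> L) at_top"
proof -
  obtain l where l: "((\<lambda>t. V (x t)) \<longlongrightarrow> l) at_top"
    using V_solution_tendsto[OF sol] by blast
  have "((\<lambda>t. 2 * (V (x t) - K * (c * (exp (fst (x t)) - 1 - fst (x t)) + \<tau> / 2 * (snd (snd (x t)))\<^sup>2)))
      \<longlongrightarrow> 2 * (l - K * (c * (exp 0 - 1 - 0) + \<tau> / 2 * 0\<^sup>2))) at_top"
    by (intro tendsto_intros l z_w_tendsto_zero[OF sol])
  then show ?thesis
    by (intro that) (simp add: V_def G_def)
qed

lemma z_drift:
  assumes sol: "is_solution F x" and "0 \<le> T" "0 < r" "\<bar>\<sigma>\<bar> = 1"
    and u_large: "\<And>t. T \<le> t \<Longrightarrow> r \<le> \<sigma> * fst (snd (x t))"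
    and small: "\<And>t. T \<le> t \<Longrightarrow> \<bar>c * (1 - exp (fst (x t)))\<bar> < r / 4 \<and> \<bar>b / B * snd (snd (x t))\<bar> < r / 4"
  shows "\<sigma> * fst (x (T + 4 / r)) \<le> \<sigma> * fst (x T) - 2"
proof -
  have \<sigma>_le_abs: "\<sigma> * y \<le> \<bar>y\<bar>" for y
    using abs_mult[of \<sigma> y] abs_ge_self[of "\<sigma> * y"] \<open>\<bar>\<sigma>\<bar> = 1\<close> by simp
  have "\<sigma> * fst (x (T + 4 / r)) + r / 2 * (T + 4 / r) \<le> \<sigma> * fst (x T) + r / 2 * T"
  proof (rule DERIV_within_atLeast_nonpos_imp_decreasing[where f = "\<lambda>t. \<sigma> * fst (x t) + r / 2 * t"])
    fix s assume "T \<le> s"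
    then have "(x has_vector_derivative F (x s)) (at s within {0..})"
      using sol \<open>0 \<le> T\<close> by (simp add: is_solution_def)
    from solution_component_derivatives(1)[OF this, of "fst (x s)" "fst (snd (x s))" "snd (snd (x s))"]
    show "((\<lambda>t. \<sigma> * fst (x t) + r / 2 * t) has_real_derivative
        \<sigma> * (c * (1 - exp (fst (x s))) - fst (snd (x s)) + b / B * snd (snd (x s))) + r / 2) (at s within {0..})"
      by (auto intro!: derivative_eq_intros)
  next
    fix s assume "T < s"
    then show "\<sigma> * (c * (1 - exp (fst (x s))) - fst (snd (x s)) + b / B * snd (snd (x s))) + r / 2 \<le> 0"
      using small[of s] u_large[of s] \<sigma>_le_abs[of "c * (1 - exp (fst (x s)))"]
        \<sigma>_le_abs[of "b / B * snd (snd (x s))"] by (simp add: algebra_simps)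
  qed (use assms in auto)
  then show ?thesis
    using \<open>0 < r\<close> by (simp add: algebra_simps)
qed

lemma eventually_forcing_small:
  assumes sol: "is_solution F x" and "0 < r"
  shows "\<forall>\<^sub>F t in at_top. \<bar>c * (1 - exp (fst (x t)))\<bar> < r \<and> \<bar>b / B * snd (snd (x t))\<bar> < r \<and> \<bar>fst (x t)\<bar> < 1"
proof -
  have "((\<lambda>t. \<bar>c * (1 - exp (fst (x t)))\<bar>) \<longlongrightarrow> \<bar>c * (1 - exp 0)\<bar>) at_top"
    "((\<lambda>t. \<bar>b / B * snd (snd (x t))\<bar>) \<longlongrightarrow> \<bar>b / B * 0\<bar>) at_top"
    "((\<lambda>t. \<bar>fst (x t)\<bar>) \<longlongrightarrow> \<bar>0\<bar>) at_top"
    by (intro tendsto_intros z_w_tendsto_zero[OF sol])+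
  then have lims: "((\<lambda>t. \<bar>c * (1 - exp (fst (x t)))\<bar>) \<longlongrightarrow> 0) at_top"
    "((\<lambda>t. \<bar>b / B * snd (snd (x t))\<bar>) \<longlongrightarrow> 0) at_top" "((\<lambda>t. \<bar>fst (x t)\<bar>) \<longlongrightarrow> 0) at_top"
    unfolding exp_zero diff_self mult_zero_right abs_zero .
  show ?thesis
    using order_tendstoD(2)[OF lims(1) \<open>0 < r\<close>] order_tendstoD(2)[OF lims(2) \<open>0 < r\<close>]
      order_tendstoD(2)[OF lims(3) zero_less_one]
    by eventually_elim auto
qed

lemma u_keeps_sign:
  assumes sol: "is_solution F x" and "0 \<le> T" "0 \<le> r"
    and large: "\<And>t. T \<le> t \<Longrightarrow> r < \<bar>fst (snd (x t))\<bar>"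
  obtains \<sigma> where "\<bar>\<sigma>\<bar> = 1" "\<And>t. T \<le> t \<Longrightarrow> r \<le> \<sigma> * fst (snd (x t))"
proof
  let ?u = "\<lambda>t. fst (snd (x t))"
  have u_deriv: "(?u has_real_derivative K * c * (exp (fst (x t)) - 1)) (at t within {0..})"
    if "0 \<le> t" for t
    using solution_component_derivatives(2)[of x t "{0..}" "fst (x t)" "?u t" "snd (snd (x t))"] sol that
    by (simp add: is_solution_def)
  have u_nonzero: "?u t \<noteq> 0" if "T \<le> t" for t
    using large[OF that] \<open>0 \<le> r\<close> by auto
  then show "\<bar>sgn (?u T)\<bar> = 1"
    by simp
  fix t assume "T \<le> t"
  have "continuous_on {T..t} ?u"
    using \<open>0 \<le> T\<close> u_deriv
    by (intro continuous_on_if_DERIV_within_atLeast[where f' = "\<lambda>s. K * c * (exp (fst (x s)) - 1)"]) auto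
  then have "sgn (?u T) = sgn (?u t)"
    using sgn_eq_if_continuous_nonzero[of T t ?u] \<open>T \<le> t\<close> u_nonzero by simp
  with large[OF \<open>T \<le> t\<close>] show "r \<le> sgn (?u T) * ?u t"
    by (auto simp: sgn_if abs_if)
qed

lemma u_tendsto_zero:
  assumes sol: "is_solution F x"
  shows "((\<lambda>t. fst (snd (x t))) \<longlongrightarrow> 0) at_top"
proof -
  let ?z = "\<lambda>t. fst (x t)" and ?u = "\<lambda>t. fst (snd (x t))"
  obtain L where L: "((\<lambda>t. (?u t)\<^sup>2) \<longlongrightarrow> L) at_top"
    using u_sq_tendsto[OF sol] by blast
  have "0 \<le> L"
    by (rule tendsto_lowerbound[OF L]) auto
  have "L = 0"
  proof (rule ccontr)
    assume "L \<noteq> 0"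
    define r where "r = sqrt (L / 2)"
    have "0 < r" "r\<^sup>2 < L"
      using \<open>0 \<le> L\<close> \<open>L \<noteq> 0\<close> by (auto simp: r_def)
    have "0 < r / 4"
      using \<open>0 < r\<close> by simp
    have "\<forall>\<^sub>F t in at_top. r\<^sup>2 < (?u t)\<^sup>2 \<and> \<bar>c * (1 - exp (?z t))\<bar> < r / 4
        \<and> \<bar>b / B * snd (snd (x t))\<bar> < r / 4 \<and> \<bar>?z t\<bar> < 1 \<and> 0 \<le> t"
      using order_tendstoD(1)[OF L \<open>r\<^sup>2 < L\<close>] eventually_forcing_small[OF sol \<open>0 < r / 4\<close>]
        eventually_ge_at_top[of 0]
      by eventually_elim auto
    then obtain T where T: "\<And>t. T \<le> t \<Longrightarrow> r\<^sup>2 < (?u t)\<^sup>2 \<and> \<bar>c * (1 - exp (?z t))\<bar> < r / 4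
        \<and> \<bar>b / B * snd (snd (x t))\<bar> < r / 4 \<and> \<bar>?z t\<bar> < 1 \<and> 0 \<le> t"
      unfolding eventually_at_top_linorder by blast
    have "0 \<le> T"
      using T by blast
    have "r < \<bar>?u t\<bar>" if "T \<le> t" for t
      using T[OF that] power2_less_imp_less[of r "\<bar>?u t\<bar>"] by simp
    then obtain \<sigma> where "\<bar>\<sigma>\<bar> = 1" "\<And>t. T \<le> t \<Longrightarrow> r \<le> \<sigma> * ?u t"
      using u_keeps_sign[OF sol \<open>0 \<le> T\<close>] \<open>0 < r\<close> by (metis less_imp_le)
    then have "\<sigma> * ?z (T + 4 / r) \<le> \<sigma> * ?z T - 2"
      using z_drift[OF sol \<open>0 \<le> T\<close> \<open>0 < r\<close>] T by blast
    moreover have "\<bar>\<sigma> * ?z s\<bar> < 1" if "T \<le> s" for s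
      using T[OF that] \<open>\<bar>\<sigma>\<bar> = 1\<close> by (simp add: abs_mult)
    ultimately show False
      using \<open>0 < r\<close> by (smt (verit) divide_nonneg_pos)
  qed
  with L show ?thesis
    by simp
qed

lemma solution_tendsto_zero:
  assumes "is_solution F x"
  shows "(x \<longlongrightarrow> 0) at_top"
proof -
  have "((\<lambda>t. (fst (x t), fst (snd (x t)), snd (snd (x t)))) \<longlongrightarrow> (0, 0, 0)) at_top"
    by (intro tendsto_Pair z_w_tendsto_zero u_tendsto_zero assms)
  then show ?thesis
    by (simp add: zero_prod_def)
qed

end


section \<open>Stability\<close>

context shifted_system
begin

lemma V_bounded_below_off_ball:
  assumes "0 < e"
  shows "\<exists>\<eta>>0. \<forall>p. e \<le> norm p \<longrightarrow> \<eta> \<le> V p"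
proof -
  define \<eta> where "\<eta> = min (K * min (G (e / 3)) (G (- (e / 3)))) (min ((e / 3)\<^sup>2 / 2) (K * \<tau> / 2 * (e / 3)\<^sup>2))"
  have "0 < \<eta>"
    using G_gt_0[of "e / 3"] G_gt_0[of "- (e / 3)"] K_gt_0 \<tau>_pos assms by (simp add: \<eta>_def)
  have \<eta>_le: "\<eta> \<le> K * min (G (e / 3)) (G (- (e / 3)))" "\<eta> \<le> (e / 3)\<^sup>2 / 2"
    "\<eta> \<le> K * \<tau> / 2 * (e / 3)\<^sup>2"
    by (simp_all add: \<eta>_def)
  have "\<eta> \<le> V p" if "e \<le> norm p" for p
  proof -
    obtain z u w where p: "p = (z, u, w)"
      by (cases p) auto
    have V_eq: "V p = K * G z + K * \<tau> / 2 * w\<^sup>2 + u\<^sup>2 / 2"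
      unfolding p V_simp by (simp add: algebra_simps)
    have parts: "0 \<le> K * G z" "0 \<le> K * \<tau> / 2 * w\<^sup>2" "0 \<le> u\<^sup>2 / 2"
      using K_gt_0 \<tau>_pos G_nonneg by auto
    have "e \<le> \<bar>z\<bar> + \<bar>u\<bar> + \<bar>w\<bar>"
      using that norm_triple_le[of z u w] p by simp
    then consider "e / 3 \<le> \<bar>z\<bar>" | "e / 3 \<le> \<bar>u\<bar>" | "e / 3 \<le> \<bar>w\<bar>"
      by linarith
    then show ?thesis
    proof cases
      case 1
      have "G (e / 3) \<le> G z" if "0 \<le> z"
        using G_mono[of "e / 3" z] 1 assms that by simp
      moreover have "G (- (e / 3)) \<le> G z" if "z < 0"
        using G_mono[of "- (e / 3)" z] mult_nonneg_nonneg[of "e / 3" "- z"] 1 assms that by simp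
      ultimately have "min (G (e / 3)) (G (- (e / 3))) \<le> G z"
        by (cases "0 \<le> z") auto
      then have "K * min (G (e / 3)) (G (- (e / 3))) \<le> K * G z"
        using K_gt_0 by (intro mult_left_mono) auto
      then show ?thesis
        using V_eq parts \<eta>_le by linarith
    next
      case 2
      then have "(e / 3)\<^sup>2 / 2 \<le> u\<^sup>2 / 2"
        using assms by (simp add: abs_le_square_iff[symmetric])
      then show ?thesis
        using V_eq parts \<eta>_le by linarith
    next
      case 3
      then have "(e / 3)\<^sup>2 \<le> w\<^sup>2"
        using assms by (simp add: abs_le_square_iff[symmetric])
      then have "K * \<tau> / 2 * (e / 3)\<^sup>2 \<le> K * \<tau> / 2 * w\<^sup>2"
        using K_gt_0 \<tau>_pos by (intro mult_left_mono) auto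
      then show ?thesis
        using V_eq parts \<eta>_le by linarith
    qed
  qed
  with \<open>0 < \<eta>\<close> show ?thesis
    by blast
qed

lemma lyapunov_stable:
  assumes "0 < e"
  shows "\<exists>d>0. \<forall>x. is_solution F x \<and> norm (x 0) < d \<longrightarrow> (\<forall>t\<ge>0. norm (x t) < e)"
proof -
  obtain \<eta> where "0 < \<eta>" and \<eta>: "\<And>p. e \<le> norm p \<Longrightarrow> \<eta> \<le> V p"
    using V_bounded_below_off_ball[OF assms] by blast
  have "isCont V 0"
    unfolding V_def G_def by (intro continuous_intros) auto
  moreover have "V 0 = 0"
    by (simp add: V_def G_def zero_prod_def)
  ultimately obtain d where "0 < d" and d: "\<And>p. norm p < d \<Longrightarrow> V p < \<eta>"
    using \<open>0 < \<eta>\<close> V_nonneg unfolding continuous_at_eps_delta dist_norm by fastforce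
  have "norm (x t) < e" if "is_solution F x" "norm (x 0) < d" "0 \<le> t" for x t
    using V_solution_antimono[OF that(1) order_refl that(3)] d[OF that(2)] \<eta>[of "x t"] by fastforce
  with \<open>0 < d\<close> show ?thesis
    by blast
qed

lemma globally_asymptotically_stable_F: "globally_asymptotically_stable F"
  unfolding globally_asymptotically_stable_def
  using solution_exists lyapunov_stable solution_tendsto_zero by blast

end

theorem theorem6p2:
  fixes \<beta>1 \<beta>2 \<nu>1 \<nu>2 \<rho>1 \<rho>2 :: real
  assumes "\<beta>1 > 0" "\<beta>2 > 0"
    and "0 < \<nu>1" "\<nu>1 < 1" "0 < \<nu>2" "\<nu>2 < 1"
    and "0 < \<rho>1" "\<rho>1 < 1" "0 < \<rho>2" "\<rho>2 < 1"
  defines "A \<equiv> \<beta>1 * (1 - \<nu>1) + \<beta>2 * (1 - \<nu>2)"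
    and "a \<equiv> \<beta>1 * (1 - \<nu>1) - \<beta>2 * (1 - \<nu>2)"
    and "B \<equiv> \<beta>1 * \<nu>1 + \<beta>2 * \<nu>2"
    and "b \<equiv> - \<beta>1 * \<nu>1 + \<beta>2 * \<nu>2"
    and "D \<equiv> \<beta>1 * (1 - \<nu>1) * (1 - \<rho>1) + \<beta>2 * (1 - \<nu>2) * (1 - \<rho>2)"
    and "d \<equiv> - \<beta>1 * (1 - \<nu>1) * (1 - \<rho>1) + \<beta>2 * (1 - \<nu>2) * (1 - \<rho>2)"
  assumes pos: "1 - (D * B - b * d) / (A * B + b * a) > 0"
    and "B\<^sup>2 > a * b"
  shows "globally_asymptotically_stable
           (vf A a B b (ln (1 - (D * B - b * d) / (A * B + b * a))))"
proof -
  have "0 < B"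
    unfolding B_def using assms by (simp add: add_pos_pos)
  have "A * B + b * a = 2 * (\<beta>1 * (1 - \<nu>1) * (\<beta>2 * \<nu>2) + \<beta>2 * (1 - \<nu>2) * (\<beta>1 * \<nu>1))"
    unfolding A_def B_def a_def b_def by (simp add: algebra_simps)
  moreover have "0 < \<beta>1 * (1 - \<nu>1) * (\<beta>2 * \<nu>2) + \<beta>2 * (1 - \<nu>2) * (\<beta>1 * \<nu>1)"
    using assms by (intro add_pos_pos mult_pos_pos) auto
  ultimately have "0 < A + b * a / B"
    using \<open>0 < B\<close> by (simp add: field_simps)
  have "a * (b / B) < B"
    using \<open>B\<^sup>2 > a * b\<close> \<open>0 < B\<close> by (simp add: field_simps power2_eq_square)
  then obtain \<tau> where "0 < \<tau>" "(b / B + \<tau> * a)\<^sup>2 < 4 * \<tau> * B"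
    using exists_pos_discriminant_neg \<open>0 < B\<close> by blast
  \<comment> \<open>The hypotheses on the \<open>\<rho>\<close>'s and \<open>pos\<close> only make \<open>exp z0\<close> the equilibrium level;
    the argument works for every \<open>z0\<close>.\<close>
  then interpret shifted_system A a B b "ln (1 - (D * B - b * d) / (A * B + b * a))" \<tau>
    using \<open>0 < B\<close> \<open>0 < A + b * a / B\<close> by unfold_locales
  show ?thesis
    using globally_asymptotically_stable_F by (simp add: F_def)
qed

end
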